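(* Let $\mathcal H$ be a complex Hilbert space, $T\in\mathcal B(\mathcal H)$ left-invertible, and $L\in\mathcal B(\mathcal H)$ a left-inverse of $T$ (i.e. $LT=I$). Let $\phi(z)=1/z$ on $\mathbb C\setminus\{0\}$, extended to the Riemann sphere by $\phi(0)=\infty$, $\phi(\infty)=0$. Then, if $0\in\sigma(T)$, $$\mathbb C\setminus\phi(\sigma_l(L))\subseteq\sigma_r(T)\setminus\sigma_l(T),$$ while if $0\notin\sigma(T)$, then $\phi(\sigma(L))=\sigma(T)$. In either case $0\notin\partial\sigma(L)$ and $\phi(\partial\sigma(L))\subseteq\sigma_r(T)$.
   Context: $\sigma(A)$ is the spectrum of $A$; $\sigma_l(A)$ (left spectrum) is the set of $\lambda\in\mathbb C$ with $A-\lambda I$ not left-invertible, and $\sigma_r(A)$ (right spectrum) the set of $\lambda$ with $A-\lambda I$ not right-invertible. $\partial$ denotes topological boundary in $\mathbb C$. *)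

theory Defs
  imports "HOL-Analysis.Analysis"
begin

class complex_vector = real_vector +
  fixes scaleC :: "complex \<Rightarrow> 'a \<Rightarrow> 'a"
  assumes scaleC_scaleR: "scaleC (complex_of_real r) x = scaleR r x"
    and scaleC_add_right: "scaleC a (x + y) = scaleC a x + scaleC a y"
    and scaleC_add_left: "scaleC (a + b) x = scaleC a x + scaleC b x"
    and scaleC_scaleC: "scaleC a (scaleC b x) = scaleC (a * b) x"
    and scaleC_one: "scaleC 1 x = x"

class complex_normed_vector = complex_vector + real_normed_vector +
  assumes norm_scaleC: "norm (scaleC a x) = cmod a * norm x"

class complex_inner = complex_normed_vector +
  fixes cinner :: "'a \<Rightarrow> 'a \<Rightarrow> complex"
  assumes cinner_commute: "cinner x y = cnj (cinner y x)"
    and cinner_add_left: "cinner (x + y) z = cinner x z + cinner y z"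
    and cinner_scaleC_left: "cinner (scaleC r x) y = cnj r * cinner x y"
    and cinner_self_norm: "cinner x x = complex_of_real ((norm x)\<^sup>2)"

class chilbert_space = complex_inner + complete_space

definition bop :: "('a::chilbert_space \<Rightarrow> 'a) \<Rightarrow> bool" where
  "bop A \<longleftrightarrow> bounded_linear A \<and> (\<forall>c x. A (scaleC c x) = scaleC c (A x))"

definition left_invertible :: "('a::chilbert_space \<Rightarrow> 'a) \<Rightarrow> bool" where
  "left_invertible A \<longleftrightarrow> (\<exists>B. bop B \<and> B \<circ> A = id)"

definition right_invertible :: "('a::chilbert_space \<Rightarrow> 'a) \<Rightarrow> bool" where
  "right_invertible A \<longleftrightarrow> (\<exists>B. bop B \<and> A \<circ> B = id)"

definition op_invertible :: "('a::chilbert_space \<Rightarrow> 'a) \<Rightarrow> bool" where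
  "op_invertible A \<longleftrightarrow> (\<exists>B. bop B \<and> B \<circ> A = id \<and> A \<circ> B = id)"

definition shift_op :: "('a::chilbert_space \<Rightarrow> 'a) \<Rightarrow> complex \<Rightarrow> 'a \<Rightarrow> 'a" where
  "shift_op A c = (\<lambda>x. A x - scaleC c x)"

definition op_spectrum :: "('a::chilbert_space \<Rightarrow> 'a) \<Rightarrow> complex set" where
  "op_spectrum A = {c. \<not> op_invertible (shift_op A c)}"

definition left_spectrum :: "('a::chilbert_space \<Rightarrow> 'a) \<Rightarrow> complex set" where
  "left_spectrum A = {c. \<not> left_invertible (shift_op A c)}"

definition right_spectrum :: "('a::chilbert_space \<Rightarrow> 'a) \<Rightarrow> complex set" where
  "right_spectrum A = {c. \<not> right_invertible (shift_op A c)}"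

text \<open>Riemann sphere modelled as complex option, None = \<infinity>.\<close>
type_synonym riemann_sphere = "complex option"

fun phi :: "riemann_sphere \<Rightarrow> riemann_sphere" where
  "phi None = Some 0"
| "phi (Some z) = (if z = 0 then None else Some (1 / z))"

end

theory Submission
  imports Defs
begin

text \<open>
  Since \<open>L T = I\<close>, for \<open>w \<noteq> 0\<close> one has \<open>L - w = -w L (T - 1/w)\<close>. Hence
  right invertibility of \<open>T - 1/w\<close> passes to \<open>L - w\<close>, and a left inverse of \<open>L - w\<close>
  yields one of \<open>T - 1/w\<close>; if \<open>T - 1/w\<close> were even invertible, \<open>L\<close> would be left
  invertible, so \<open>T\<close> would be invertible. If \<open>T\<close> is invertible, \<open>L = T\<^sup>-\<^sup>1\<close> and the identity
  is symmetric in \<open>L\<close> and \<open>T\<close>, so the spectra correspond under \<open>z \<mapsto> 1/z\<close>.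

  For the boundary: if \<open>(L - w) R = I\<close>, then \<open>(L - w') R = I - (w' - w) R\<close> is invertible
  for \<open>w'\<close> close to \<open>w\<close> (a contraction perturbation of the identity), which makes membership
  in \<open>\<sigma>(L)\<close> constant near \<open>w\<close>. This applies to \<open>w = 0\<close> with \<open>R = T\<close>, and to every
  \<open>w \<noteq> 0\<close> with \<open>1/w \<notin> \<sigma>\<^sub>r(T)\<close>.
\<close>

global_interpretation complex_vector: vector_space "scaleC :: complex \<Rightarrow> 'a \<Rightarrow> 'a::complex_vector"
  by unfold_locales (simp_all add: scaleC_add_right scaleC_add_left scaleC_scaleC scaleC_one)

lemma bopD:
  assumes "bop A"
  shows "bounded_linear A" and "A (scaleC c x) = scaleC c (A x)"
    and "A (x + y) = A x + A y" and "A (x - y) = A x - A y"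
  using assms unfolding bop_def by (auto simp: linear_simps)

lemma bop_id: "bop id"
  unfolding bop_def by (simp add: id_def)

lemma bop_comp: "bop A \<Longrightarrow> bop B \<Longrightarrow> bop (A \<circ> B)"
  unfolding bop_def by (auto simp: o_def intro: bounded_linear_compose)

lemma bop_scaleC: "bop (scaleC c :: 'a::chilbert_space \<Rightarrow> 'a)"
proof -
  have "bounded_linear (scaleC c :: 'a \<Rightarrow> 'a)"
  proof (rule bounded_linear_intro[where K = "cmod c"])
    fix r and x :: 'a
    show "scaleC c (r *\<^sub>R x) = r *\<^sub>R scaleC c x"
      by (simp add: scaleC_scaleR[symmetric] mult.commute)
  qed (simp_all add: scaleC_add_right norm_scaleC mult.commute)
  then show ?thesis
    unfolding bop_def by (simp add: mult.commute)
qed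

lemma bop_diff: "bop A \<Longrightarrow> bop B \<Longrightarrow> bop (\<lambda>x. A x - B x)"
  unfolding bop_def by (auto intro: bounded_linear_sub simp: complex_vector.scale_right_diff_distrib)

lemma bop_shift_op: "bop A \<Longrightarrow> bop (shift_op A c)"
  unfolding shift_op_def by (intro bop_diff bop_scaleC)

lemma shift_op_zero [simp]: "shift_op A 0 = A"
  by (simp add: shift_op_def fun_eq_iff)

lemma left_inverse_eq_right_inverse: "B \<circ> A = id \<Longrightarrow> A \<circ> C = id \<Longrightarrow> B = C"
  by (metis comp_assoc comp_id id_comp)

lemma op_invertible_iff_left_right:
  "op_invertible A \<longleftrightarrow> left_invertible A \<and> right_invertible A"
  unfolding op_invertible_def left_invertible_def right_invertible_def
  using left_inverse_eq_right_inverse by metis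

lemma op_invertible_left_inverse: "op_invertible A \<Longrightarrow> B \<circ> A = id \<Longrightarrow> A \<circ> B = id"
  unfolding op_invertible_def using left_inverse_eq_right_inverse by metis

lemma left_invertible_comp:
  "left_invertible A \<Longrightarrow> left_invertible B \<Longrightarrow> left_invertible (A \<circ> B)"
  unfolding left_invertible_def
  by (metis (no_types, opaque_lifting) bop_comp comp_assoc comp_id)

lemma right_invertible_comp:
  "right_invertible A \<Longrightarrow> right_invertible B \<Longrightarrow> right_invertible (A \<circ> B)"
  unfolding right_invertible_def
  by (metis (no_types, opaque_lifting) bop_comp comp_assoc comp_id)

lemma op_invertible_comp: "op_invertible A \<Longrightarrow> op_invertible B \<Longrightarrow> op_invertible (A \<circ> B)"
  by (simp add: op_invertible_iff_left_right left_invertible_comp right_invertible_comp)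

lemma left_invertible_compD: "bop C \<Longrightarrow> left_invertible (C \<circ> A) \<Longrightarrow> left_invertible A"
  unfolding left_invertible_def by (metis bop_comp comp_assoc)

lemma left_invertible_comp_op_invertibleD:
  assumes "bop B" "op_invertible B" "left_invertible (A \<circ> B)"
  shows "left_invertible A"
proof -
  obtain V where "bop V" "(V \<circ> A) \<circ> B = id"
    using assms(3) unfolding left_invertible_def by (auto simp: comp_assoc)
  then have "(B \<circ> V) \<circ> A = id"
    using op_invertible_left_inverse[OF assms(2)] by (simp add: comp_assoc)
  with \<open>bop V\<close> \<open>bop B\<close> show ?thesis
    unfolding left_invertible_def by (blast intro: bop_comp)
qed

lemma op_invertible_scaleC: "c \<noteq> 0 \<Longrightarrow> op_invertible (scaleC c)"
  unfolding op_invertible_def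
  by (rule exI[of _ "scaleC (inverse c)"]) (simp add: bop_scaleC fun_eq_iff)

lemma op_invertible_right_inverse_of_left_invertible:
  "bop L \<Longrightarrow> L \<circ> T = id \<Longrightarrow> left_invertible L \<Longrightarrow> op_invertible T"
  unfolding left_invertible_def op_invertible_def using left_inverse_eq_right_inverse by metis

lemma op_invertible_bounded_below_surj:
  fixes E :: "'a::chilbert_space \<Rightarrow> 'a"
  assumes E: "bop E" and m: "m > 0" and below: "\<And>y. m * norm y \<le> norm (E y)"
    and surj: "surj E"
  shows "op_invertible E"
proof -
  have "inj E"
  proof (rule injI)
    fix a b assume "E a = E b"
    then have "m * norm (a - b) \<le> 0" using below[of "a - b"] bopD[OF E] by simp
    with m show "a = b" by (simp add: mult_le_0_iff)
  qed
  define G where "G = inv E"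
  have EG: "E (G x) = x" for x unfolding G_def by (rule surj_f_inv_f[OF surj])
  have GE: "G (E y) = y" for y unfolding G_def by (rule inv_f_f[OF \<open>inj E\<close>])
  have G_eqI: "G x = y" if "x = E y" for x y using that GE by simp
  have "bounded_linear G"
  proof (rule bounded_linear_intro[where K = "1 / m"])
    fix x y show "G (x + y) = G x + G y"
      by (rule G_eqI) (simp add: EG bopD[OF E])
  next
    fix r and x :: 'a show "G (r *\<^sub>R x) = r *\<^sub>R G x"
      by (rule G_eqI) (simp add: EG bopD[OF E] scaleC_scaleR[symmetric])
  next
    fix x :: 'a
    have "m * norm (G x) \<le> norm x" using below[of "G x"] by (simp add: EG)
    with m show "norm (G x) \<le> norm x * (1 / m)" by (simp add: field_simps)
  qed
  moreover have "G (scaleC c x) = scaleC c (G x)" for c x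
    by (rule G_eqI) (simp add: EG bopD[OF E])
  ultimately show ?thesis
    unfolding op_invertible_def bop_def using EG GE by (auto simp: fun_eq_iff)
qed

lemma op_invertible_id_minus_contraction:
  fixes E :: "'a::chilbert_space \<Rightarrow> 'a"
  assumes E: "bop E" and q: "0 \<le> q" "q < 1" and bound: "\<And>x. norm (E x) \<le> q * norm x"
  shows "op_invertible (\<lambda>x. x - E x)"
proof (rule op_invertible_bounded_below_surj)
  show "bop (\<lambda>x. x - E x)"
    using bop_diff[OF _ E] bop_id by (simp add: id_def)
  show "0 < 1 - q" using q by simp
next
  fix y :: 'a
  have "norm y \<le> norm (y - E y) + norm (E y)"
    using norm_triangle_ineq[of "y - E y" "E y"] by simp
  with bound[of y] show "(1 - q) * norm y \<le> norm (y - E y)"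
    by (simp add: algebra_simps)
next
  show "surj (\<lambda>x. x - E x)"
    unfolding surj_def
  proof
    fix x :: 'a
    have "\<exists>!y. x + E y = y"
    proof (rule banach_fix_type[OF q], intro allI)
      fix a b :: 'a
      show "dist (x + E a) (x + E b) \<le> q * dist a b"
        using bound[of "a - b"] by (simp add: dist_norm bopD[OF E])
    qed
    then obtain y where "x + E y = y" by blast
    then show "\<exists>y. x = y - E y" by (metis add_diff_cancel_right')
  qed
qed

lemma not_frontier_if_locally_constant:
  assumes "e > 0" and "\<And>y. dist x y < e \<Longrightarrow> y \<in> S \<longleftrightarrow> x \<in> S"
  shows "x \<notin> frontier S"
proof (cases "x \<in> S")
  case True
  then have "ball x e \<subseteq> S" using assms(2) by auto
  with \<open>e > 0\<close> show ?thesis by (auto simp: frontier_def mem_interior)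
next
  case False
  then have "\<forall>y\<in>S. e \<le> dist y x" using assms(2) by (force simp: dist_commute)
  with \<open>e > 0\<close> show ?thesis by (auto simp: frontier_def closure_approachable not_less[symmetric])
qed

lemma shift_op_comp_right_inverse:
  assumes L: "bop L" and LR: "shift_op L w \<circ> R = id"
  shows "shift_op L w' \<circ> R = (\<lambda>y. y - scaleC (w' - w) (R y))"
    and "shift_op L w' = shift_op L w \<circ> (\<lambda>y. y - scaleC (w' - w) (R y))"
proof -
  have LR': "L (R x) = x + scaleC w (R x)" for x
    using LR by (simp add: fun_eq_iff shift_op_def algebra_simps)
  show "shift_op L w' \<circ> R = (\<lambda>y. y - scaleC (w' - w) (R y))"
    by (rule ext) (simp add: shift_op_def LR' algebra_simps)
  show "shift_op L w' = shift_op L w \<circ> (\<lambda>y. y - scaleC (w' - w) (R y))"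
    by (rule ext) (simp add: shift_op_def bopD[OF L] LR' algebra_simps)
qed

lemma op_spectrum_eq_if_perturbation_invertible:
  assumes L: "bop L" and R: "bop R" and LR: "shift_op L w \<circ> R = id"
    and E_inv: "op_invertible (\<lambda>y. y - scaleC (w' - w) (R y))"
  shows "w' \<in> op_spectrum L \<longleftrightarrow> w \<in> op_spectrum L"
proof -
  define E where "E = (\<lambda>y. y - scaleC (w' - w) (R y))"
  note shift_R = shift_op_comp_right_inverse(1)[OF L LR, of w', folded E_def]
    and shift_eq = shift_op_comp_right_inverse(2)[OF L LR, of w', folded E_def]
  have "w' \<notin> op_spectrum L" if "w \<notin> op_spectrum L"
    using that op_invertible_comp[OF _ E_inv[folded E_def]] shift_eq
    by (simp add: op_spectrum_def)
  moreover have "w \<notin> op_spectrum L" if w'_resolvent: "w' \<notin> op_spectrum L"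
  proof -
    obtain V where V: "bop V" "V \<circ> shift_op L w' = id" "shift_op L w' \<circ> V = id"
      using w'_resolvent unfolding op_spectrum_def op_invertible_def by blast
    then have "op_invertible V"
      using bop_shift_op[OF L] unfolding op_invertible_def by auto
    moreover have "R = V \<circ> E"
      using V(2) shift_R by (metis comp_assoc id_comp)
    ultimately have "op_invertible R"
      using op_invertible_comp[OF _ E_inv[folded E_def]] by simp
    then have "R \<circ> shift_op L w = id"
      using op_invertible_left_inverse LR by blast
    with R LR show ?thesis
      by (auto simp: op_spectrum_def op_invertible_def)
  qed
  ultimately show ?thesis by blast
qed

lemma op_spectrum_locally_constant_at_right_invertible:
  fixes L :: "'a::chilbert_space \<Rightarrow> 'a"
  assumes L: "bop L" and ri: "right_invertible (shift_op L w)"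
  obtains e where "e > 0" and "\<And>w'. dist w w' < e \<Longrightarrow> w' \<in> op_spectrum L \<longleftrightarrow> w \<in> op_spectrum L"
proof -
  obtain R where R: "bop R" and LR: "shift_op L w \<circ> R = id"
    using ri unfolding right_invertible_def by blast
  obtain K where K: "K > 0" and R_bound: "\<And>x. norm (R x) \<le> K * norm x"
    using bounded_linear.pos_bounded[OF bopD(1)[OF R]] by (auto simp: mult.commute)
  have "op_invertible (\<lambda>y. y - scaleC (w' - w) (R y))" if "dist w w' < 1 / K" for w'
  proof (rule op_invertible_id_minus_contraction)
    show "bop (\<lambda>y. scaleC (w' - w) (R y))"
      using bop_comp[OF bop_scaleC R] by (simp add: o_def)
    show "cmod (w' - w) * K < 1"
      using that K by (simp add: dist_norm norm_minus_commute field_simps)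
    fix x show "norm (scaleC (w' - w) (R x)) \<le> cmod (w' - w) * K * norm x"
      using mult_left_mono[OF R_bound[of x], of "cmod (w' - w)"]
      by (simp add: norm_scaleC mult.assoc)
  qed (use K in simp)
  with K show ?thesis
    using that[of "1 / K"] op_spectrum_eq_if_perturbation_invertible[OF L R LR] by simp
qed

lemma right_invertible_not_frontier_op_spectrum:
  "bop L \<Longrightarrow> right_invertible (shift_op L w) \<Longrightarrow> w \<notin> frontier (op_spectrum L)"
  by (rule op_spectrum_locally_constant_at_right_invertible, assumption+) (rule not_frontier_if_locally_constant)

lemma shift_op_left_inverse:
  assumes L: "bop L" and LT: "L \<circ> T = id" and w: "w \<noteq> 0"
  shows "shift_op L w = scaleC (- w) \<circ> (L \<circ> shift_op T (inverse w))"
proof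
  fix x
  have "L (T x) = x" using LT by (simp add: fun_eq_iff)
  with w show "shift_op L w x = (scaleC (- w) \<circ> (L \<circ> shift_op T (inverse w))) x"
    by (simp add: shift_op_def bopD[OF L] complex_vector.scale_right_diff_distrib)
qed

lemma zero_notin_frontier_op_spectrum_left_inverse:
  assumes "bop T" and "bop L" and "L \<circ> T = id"
  shows "0 \<notin> frontier (op_spectrum L)"
  using assms by (intro right_invertible_not_frontier_op_spectrum) (auto simp: right_invertible_def)

lemma inverse_frontier_op_spectrum_left_inverse:
  assumes T: "bop T" and L: "bop L" and LT: "L \<circ> T = id"
    and w: "w \<in> frontier (op_spectrum L)"
  shows "inverse w \<in> right_spectrum T"
proof (rule ccontr)
  assume "inverse w \<notin> right_spectrum T"
  then have "right_invertible (shift_op T (inverse w))"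
    by (simp add: right_spectrum_def)
  moreover have "w \<noteq> 0"
    using w zero_notin_frontier_op_spectrum_left_inverse[OF T L LT] by auto
  moreover have "right_invertible L"
    using T LT by (auto simp: right_invertible_def)
  moreover have "right_invertible (scaleC (- w))"
    using op_invertible_scaleC[of "- w"] \<open>w \<noteq> 0\<close> op_invertible_iff_left_right by auto
  ultimately have "right_invertible (scaleC (- w) \<circ> (L \<circ> shift_op T (inverse w)))"
    by (blast intro: right_invertible_comp)
  then have "right_invertible (shift_op L w)"
    using shift_op_left_inverse[OF L LT \<open>w \<noteq> 0\<close>] by simp
  with w show False
    using right_invertible_not_frontier_op_spectrum[OF L] by blast
qed

lemma right_minus_left_spectrum_of_left_inverse:
  assumes T: "bop T" and L: "bop L" and LT: "L \<circ> T = id"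
    and T_sing: "0 \<in> op_spectrum T" and z: "z = 0 \<or> inverse z \<notin> left_spectrum L"
  shows "z \<in> right_spectrum T - left_spectrum T"
proof -
  have L_Tz: "left_invertible (L \<circ> shift_op T z)"
  proof (cases "z = 0")
    case True
    with LT bop_id show ?thesis by (auto simp: left_invertible_def)
  next
    case False
    then have "left_invertible (scaleC (- inverse z) \<circ> (L \<circ> shift_op T z))"
      using z shift_op_left_inverse[OF L LT, of "inverse z"] by (simp add: left_spectrum_def)
    then show ?thesis by (rule left_invertible_compD[OF bop_scaleC])
  qed
  then have "left_invertible (shift_op T z)"
    by (rule left_invertible_compD[OF L])
  moreover have "\<not> right_invertible (shift_op T z)"
  proof
    assume "right_invertible (shift_op T z)"
    with \<open>left_invertible (shift_op T z)\<close> have "op_invertible (shift_op T z)"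
      by (simp add: op_invertible_iff_left_right)
    then have "left_invertible L"
      using left_invertible_comp_op_invertibleD[OF bop_shift_op[OF T] _ L_Tz] by blast
    then have "op_invertible T"
      by (rule op_invertible_right_inverse_of_left_invertible[OF L LT])
    with T_sing show False by (simp add: op_spectrum_def)
  qed
  ultimately show ?thesis
    by (simp add: left_spectrum_def right_spectrum_def)
qed

lemma op_spectrum_left_inverse_of_invertible:
  assumes T: "bop T" and L: "bop L" and LT: "L \<circ> T = id" and T_inv: "op_invertible T"
  shows "op_spectrum L = inverse ` op_spectrum T"
proof -
  have TL: "T \<circ> L = id"
    by (rule op_invertible_left_inverse[OF T_inv LT])
  have L_inv: "op_invertible L"
    using T LT TL by (auto simp: op_invertible_def)
  have spectrum_iff: "w \<in> op_spectrum L \<longleftrightarrow> inverse w \<in> op_spectrum T" for w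
  proof (cases "w = 0")
    case True
    with T_inv L_inv show ?thesis by (simp add: op_spectrum_def)
  next
    case False
    have "op_invertible (shift_op L w) \<longleftrightarrow> op_invertible (shift_op T (inverse w))"
    proof
      assume "op_invertible (shift_op L w)"
      then show "op_invertible (shift_op T (inverse w))"
        using shift_op_left_inverse[OF T TL, of "inverse w"] False
        by (simp add: op_invertible_comp op_invertible_scaleC T_inv)
    next
      assume "op_invertible (shift_op T (inverse w))"
      then show "op_invertible (shift_op L w)"
        using shift_op_left_inverse[OF L LT False]
        by (simp add: op_invertible_comp op_invertible_scaleC False L_inv)
    qed
    then show ?thesis by (simp add: op_spectrum_def)
  qed
  have "w \<in> inverse ` op_spectrum T \<longleftrightarrow> inverse w \<in> op_spectrum T" for w :: complex
    by (metis image_iff inverse_inverse_eq)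
  with spectrum_iff show ?thesis by blast
qed

lemma phi_Some_image:
  assumes "0 \<notin> S"
  shows "phi ` Some ` S = Some ` inverse ` S"
proof -
  have "(\<lambda>w. phi (Some w)) ` S = (\<lambda>w. Some (inverse w)) ` S"
    using assms by (intro image_cong) (auto simp: inverse_eq_divide)
  then show ?thesis by (simp add: image_image)
qed

lemma Some_notin_phi_Some_image_iff:
  "Some z \<notin> phi ` Some ` S \<longleftrightarrow> z = 0 \<or> inverse z \<notin> S"
proof -
  have "Some z \<in> phi ` Some ` S \<longleftrightarrow> (\<exists>w\<in>S. w \<noteq> 0 \<and> z = inverse w)"
    by (auto simp: image_iff inverse_eq_divide)
  also have "\<dots> \<longleftrightarrow> z \<noteq> 0 \<and> inverse z \<in> S"
    by (metis inverse_inverse_eq inverse_zero)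
  finally show ?thesis by blast
qed

theorem theorem4p1:
  fixes T L :: "'a::chilbert_space \<Rightarrow> 'a"
  assumes "bop T" and "bop L"
    and "left_invertible T"
    and "L \<circ> T = id"
  shows "(0 \<in> op_spectrum T \<longrightarrow>
            {z. Some z \<notin> phi ` Some ` left_spectrum L}
              \<subseteq> right_spectrum T - left_spectrum T)
       \<and> (0 \<notin> op_spectrum T \<longrightarrow>
            phi ` Some ` op_spectrum L = Some ` op_spectrum T)
       \<and> 0 \<notin> frontier (op_spectrum L)
       \<and> phi ` Some ` frontier (op_spectrum L) \<subseteq> Some ` right_spectrum T"
proof -
  note T = assms(1) and L = assms(2) and LT = assms(4)
  have frontier_0: "0 \<notin> frontier (op_spectrum L)"
    by (rule zero_notin_frontier_op_spectrum_left_inverse[OF T L LT])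
  have "{z. Some z \<notin> phi ` Some ` left_spectrum L} \<subseteq> right_spectrum T - left_spectrum T"
    if "0 \<in> op_spectrum T"
    using right_minus_left_spectrum_of_left_inverse[OF T L LT that]
    by (auto simp: Some_notin_phi_Some_image_iff)
  moreover have "phi ` Some ` op_spectrum L = Some ` op_spectrum T" if "0 \<notin> op_spectrum T"
  proof -
    have spectrum_L: "op_spectrum L = inverse ` op_spectrum T"
      using that op_spectrum_left_inverse_of_invertible[OF T L LT] by (simp add: op_spectrum_def)
    with that have "0 \<notin> op_spectrum L" by auto
    then have "phi ` Some ` op_spectrum L = Some ` inverse ` op_spectrum L"
      by (rule phi_Some_image)
    also have "inverse ` op_spectrum L = op_spectrum T"
      using spectrum_L by (simp add: image_image)
    finally show ?thesis .
  qed
  moreover have "phi ` Some ` frontier (op_spectrum L) \<subseteq> Some ` right_spectrum T"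
    using frontier_0 inverse_frontier_op_spectrum_left_inverse[OF T L LT]
    by (auto simp: phi_Some_image)
  ultimately show ?thesis using frontier_0 by blast
qed

end
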